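(* Let $A\in \mathbb{Z}^{m\times n}$, $b\in \mathbb{Z}^m$. If $Ax=b$ has a $p$-adic solution and a $q$-adic solution, for distinct primes $p$ and $q$, then $Ax=b$ has an integral solution.
   Context: For a prime $p$, a $p$-adic rational is a number $a/p^k$ with $a,k\in\mathbb{Z}$, $k\ge0$; a vector is $p$-adic if all entries are $p$-adic rationals. *)

theory Defs
  imports Complex_Main "HOL-Computational_Algebra.Primes"
begin

definition p_adic_rat :: "nat \<Rightarrow> rat \<Rightarrow> bool" where
  "p_adic_rat p x \<longleftrightarrow> (\<exists>(a::int) (k::nat). x = of_int a / of_nat p ^ k)"

definition solves :: "nat \<Rightarrow> nat \<Rightarrow> (nat \<Rightarrow> nat \<Rightarrow> int) \<Rightarrow> (nat \<Rightarrow> int) \<Rightarrow> (nat \<Rightarrow> rat) \<Rightarrow> bool" where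
  "solves m n A b x \<longleftrightarrow> (\<forall>i<m. (\<Sum>j<n. of_int (A i j) * x j) = of_int (b i))"

end

theory Submission
  imports Defs
begin

text \<open>Clearing denominators turns a \<open>p\<close>-adic solution into an integral solution of
  \<open>A x = p\<^sup>K b\<close>, and likewise a \<open>q\<close>-adic one into an integral solution of \<open>A y = q\<^sup>L b\<close>.
  Since \<open>p\<^sup>K\<close> and \<open>q\<^sup>L\<close> are coprime, a Bezout combination \<open>u p\<^sup>K + v q\<^sup>L = 1\<close>
  gives the integral solution \<open>u x + v y\<close> of \<open>A z = b\<close>.\<close>

lemma p_adic_rat_common_denominator:
  assumes "p > 0" and "\<forall>j<n. p_adic_rat p (x j)"
  obtains a :: "nat \<Rightarrow> int" and K :: nat
  where "\<And>j. j < n \<Longrightarrow> x j = of_int (a j) / of_nat p ^ K"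
proof -
  from assms(2) obtain c k where ck: "\<And>j. j < n \<Longrightarrow> x j = of_int (c j) / of_nat p ^ k j"
    unfolding p_adic_rat_def by metis
  define K where "K = (\<Sum>j<n. k j)"
  have "x j = of_int (c j * int p ^ (K - k j)) / of_nat p ^ K" if "j < n" for j
  proof -
    have "k j \<le> K"
      unfolding K_def using that by (intro member_le_sum) auto
    then have "(of_nat p :: rat) ^ K = of_nat p ^ k j * of_nat p ^ (K - k j)"
      by (simp flip: power_add)
    then show ?thesis
      using assms(1) ck[OF that] by simp
  qed
  then show thesis
    by (rule that)
qed

lemma solves_linear_combination:
  assumes "solves m n A b x" and "solves m n A c y"
  shows "solves m n A (\<lambda>i. u * b i + v * c i) (\<lambda>j. of_int u * x j + of_int v * y j)"
  using assms
  by (simp add: solves_def algebra_simps sum.distrib flip: sum_distrib_left)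

lemma p_adic_solution_imp_integral_solution_of_scaled:
  assumes "p > 0" and "solves m n A b x" and "\<forall>j<n. p_adic_rat p (x j)"
  obtains z :: "nat \<Rightarrow> int" and K :: nat
  where "solves m n A (\<lambda>i. int p ^ K * b i) (\<lambda>j. of_int (z j))"
proof -
  obtain z K where z: "\<And>j. j < n \<Longrightarrow> x j = of_int (z j) / of_nat p ^ K"
    using p_adic_rat_common_denominator assms(1,3) by blast
  have "solves m n A (\<lambda>i. int p ^ K * b i) (\<lambda>j. of_int (z j))"
    unfolding solves_def
  proof (intro allI impI)
    fix i assume "i < m"
    have "(\<Sum>j<n. of_int (A i j) * of_int (z j)) = of_nat p ^ K * (\<Sum>j<n. of_int (A i j) * x j)"
      using assms(1) by (simp add: z sum_distrib_left)
    also have "\<dots> = of_int (int p ^ K * b i)"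
      using assms(2) \<open>i < m\<close> unfolding solves_def by simp
    finally show "(\<Sum>j<n. of_int (A i j) * of_int (z j)) = (of_int (int p ^ K * b i) :: rat)" .
  qed
  then show thesis
    by (rule that)
qed

theorem corollary2p5:
  fixes m n :: nat and A :: "nat \<Rightarrow> nat \<Rightarrow> int" and b :: "nat \<Rightarrow> int" and p q :: nat
  assumes "prime p" and "prime q" and "p \<noteq> q"
    and "\<exists>x. solves m n A b x \<and> (\<forall>j<n. p_adic_rat p (x j))"
    and "\<exists>y. solves m n A b y \<and> (\<forall>j<n. p_adic_rat q (y j))"
  shows "\<exists>z::nat \<Rightarrow> int. solves m n A b (\<lambda>j. of_int (z j))"
proof -
  obtain x K where x: "solves m n A (\<lambda>i. int p ^ K * b i) (\<lambda>j. of_int (x j))"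
    using assms(1,4) p_adic_solution_imp_integral_solution_of_scaled prime_gt_0_nat by metis
  obtain y L where y: "solves m n A (\<lambda>i. int q ^ L * b i) (\<lambda>j. of_int (y j))"
    using assms(2,5) p_adic_solution_imp_integral_solution_of_scaled prime_gt_0_nat by metis
  have "coprime (int p ^ K) (int q ^ L)"
    using assms(1-3) by (simp add: primes_coprime)
  then obtain u v where uv: "u * int p ^ K + v * int q ^ L = 1"
    by (metis bezout_int coprime_iff_gcd_eq_1)
  have "solves m n A (\<lambda>i. u * (int p ^ K * b i) + v * (int q ^ L * b i))
      (\<lambda>j. of_int (u * x j + v * y j))"
    using solves_linear_combination[OF x y, of u v] by simp
  also have "(\<lambda>i. u * (int p ^ K * b i) + v * (int q ^ L * b i)) = b"
    using uv by (simp add: fun_eq_iff flip: distrib_right mult.assoc)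
  finally show ?thesis
    by (intro exI[of _ "\<lambda>j. u * x j + v * y j"])
qed

end
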